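(* Fix $T>0$, a closed non-trivial rectangle $I\times J\subset(0,T]\times\mathbb R^k$ and an integer $d\ge1$. For all $N>0$, $b>0$, $\tilde\gamma>\gamma>0$ and $p>\frac{2d}{\gamma}(\tilde\gamma b-2k-4)$, there is a finite constant $C=C(I,J,N,b,\gamma,\tilde\gamma,p)>0$ such that for all $a\in[0,N]$, $$\int_Idt\int_Ids\int_Jdx\int_Jdy\,\big(|t-s|^{\tilde\gamma/2}+\|x-y\|^{\tilde\gamma}\big)^{-b/2}\Big(\frac{|t-s|^{\gamma/4}+\|x-y\|^{\gamma/2}}{a}\wedge1\Big)^{p/(2d)}\le C\,K_{\frac{\tilde\gamma}{\gamma}b-\frac{4+2k}{\gamma}}(a),$$ provided the constant $N_0$ in the definition of $K_0$ is sufficiently large.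
   Context: For $\alpha\in\mathbb R$ and $r>0$: $K_\alpha(r)=r^{-\alpha}$ if $\alpha>0$; $K_0(r)=\log(N_0/r)$ for a constant $N_0$; $K_\alpha(r)=1$ if $\alpha<0$ (with $K_\alpha(0)=+\infty$ for $\alpha\ge0$). A closed non-trivial rectangle is $I\times J$ with $I\subset(0,T]$ a closed non-degenerate interval and $J=\prod_{i=1}^k[a_i,b_i]$, $a_i<b_i$. Norms are Euclidean. *)

theory Defs
  imports "HOL-Analysis.Analysis"
begin

definition Kfun :: "real \<Rightarrow> real \<Rightarrow> real \<Rightarrow> ennreal" where
  "Kfun N0 \<alpha> r =
     (if \<alpha> > 0 then (if r = 0 then \<infinity> else ennreal (r powr (-\<alpha>)))
      else if \<alpha> = 0 then (if r = 0 then \<infinity> else ennreal (ln (N0 / r)))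
      else 1)"

text \<open>The truncation (u / a) \<and> 1, with the convention u/0 = +infinity, so the value is 1 when a = 0.\<close>
definition trunc_ratio :: "real \<Rightarrow> real \<Rightarrow> real" where
  "trunc_ratio u a = (if a = 0 then 1 else min (u / a) 1)"

definition integrand ::
  "real \<Rightarrow> real \<Rightarrow> real \<Rightarrow> nat \<Rightarrow> real \<Rightarrow> real \<Rightarrow> real \<Rightarrow> real \<Rightarrow> 'a::real_normed_vector \<Rightarrow> 'a \<Rightarrow> real" where
  "integrand b \<gamma> \<gamma>' d p a t s x y =
     (\<bar>t - s\<bar> powr (\<gamma>' / 2) + norm (x - y) powr \<gamma>') powr (- b / 2) *
     (trunc_ratio (\<bar>t - s\<bar> powr (\<gamma> / 4) + norm (x - y) powr (\<gamma> / 2)) a) powr (p / (2 * real d))"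

end

theory Submission
  imports Defs
begin

text \<open>
  Write \<open>\<rho> = max (sqrt |t - s|) |x - y|\<close> for the parabolic distance and
  \<open>n = k + 2\<close> for the parabolic dimension.  Off the diagonal the integrand is at most
  \<open>\<rho>^-\<beta> T^q\<close> with \<open>\<beta> = \<gamma>' b / 2\<close>, \<open>q = p / (2 d)\<close>, where the truncation \<open>T\<close> is comparable to
  \<open>min (\<rho>^(\<gamma>/2) / a) 1\<close>; the hypothesis on \<open>p\<close> says exactly \<open>m = \<gamma> q / 2 > \<beta> - n\<close>.
  All bounds obtained this way are powers of \<open>\<rho>\<close>, and a power of \<open>\<rho>\<close> is dominated by a
  scaled tensor \<open>\<phi>((t-s)/r\<^sup>2) \<Prod>\<^sub>i \<phi>((x-y)\<^sub>i/r)\<close> of a one-dimensional profile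
  \<open>\<phi> w = min |w|^-e1 |w|^-e2\<close>.  Tensors integrate by Fubini and rescaling: the fourfold integral
  of a finite sum of tensors is at most \<open>|I| |J| \<Sigma> c r^n (\<integral>\<phi>)^(k+1)\<close>.  The sign of
  \<open>\<alpha> = 2 (\<beta> - n) / \<gamma>\<close> then decides the estimate: for \<open>\<alpha> < 0\<close> one local tensor at the scale of
  the domain gives a constant; for \<open>\<alpha> > 0\<close> one tensor at the switching scale
  \<open>\<rho>0 = (a/2)^(2/\<gamma>)\<close> gives \<open>\<rho>0^(n-\<beta>) \<sim> a^-\<alpha>\<close>; for \<open>\<alpha> = 0\<close> each dyadic shell between \<open>\<rho>0\<close>
  and the diameter contributes \<open>O(1)\<close> and there are \<open>O(ln (N0/a))\<close> of them.
\<close>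

definition minpow :: "real \<Rightarrow> real \<Rightarrow> real \<Rightarrow> ennreal" where
  "minpow e1 e2 w = (if w = 0 then \<infinity> else ennreal (min (\<bar>w\<bar> powr (-e1)) (\<bar>w\<bar> powr (-e2))))"

lemma minpow_measurable [measurable]: "minpow e1 e2 \<in> borel_measurable borel"
  unfolding minpow_def by measurable

lemma nn_integral_reflect:
  fixes G :: "real \<Rightarrow> ennreal"
  assumes [measurable]: "G \<in> borel_measurable borel"
  shows "(\<integral>\<^sup>+w. G (c - w) \<partial>lborel) = (\<integral>\<^sup>+w. G w \<partial>lborel)"
  using nn_integral_real_affine[OF assms, of "-1" c] by simp

lemma nn_integral_rescale:
  fixes G :: "real \<Rightarrow> ennreal"
  assumes [measurable]: "G \<in> borel_measurable borel" and "l > 0"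
  shows "(\<integral>\<^sup>+w. G (w / l) \<partial>lborel) = ennreal l * (\<integral>\<^sup>+w. G w \<partial>lborel)"
  using nn_integral_real_affine[of "\<lambda>w. G (w / l)" l 0] assms by simp

lemma nn_integral_powr_near_0:
  assumes "e < 1"
  shows "(\<integral>\<^sup>+w. ennreal (w powr (-e)) * indicator {0..1} w \<partial>lborel) = ennreal (1 / (1 - e))"
proof -
  have "((\<lambda>x. x powr (-e)) has_integral (1 powr (-e+1) / (-e+1))) {0..1}"
    by (rule has_integral_powr_from_0) (use assms in auto)
  from nn_integral_has_integral_lebesgue'[OF _ this] show ?thesis by simp
qed

lemma nn_integral_powr_at_top:
  assumes "e > 1"
  shows "(\<integral>\<^sup>+w. ennreal (w powr (-e)) * indicator {1..} w \<partial>lborel) = ennreal (1 / (e - 1))"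
proof -
  have "((\<lambda>x. x powr (-e)) has_integral (-(1 powr (-e+1)) / (-e+1))) {1..}"
    by (rule has_integral_powr_to_inf) (use assms in auto)
  from nn_integral_has_integral_lebesgue'[OF _ this] show ?thesis
    using assms by (simp add: field_simps)
qed

lemma minpow_integrable:
  assumes "e1 < 1" "1 < e2"
  shows "(\<integral>\<^sup>+w. minpow e1 e2 w \<partial>lborel) < \<infinity>"
proof -
  define g where "g w = ennreal (w powr (-e1)) * indicator {0..1} w + ennreal (w powr (-e2)) * indicator {1..} w" for w
  have [measurable]: "g \<in> borel_measurable borel" unfolding g_def by measurable
  have "AE w in lborel. minpow e1 e2 w \<le> g w + g (0 - w)"
    using AE_lborel_singleton[of 0]
  proof eventually_elim
    case (elim w)
    then show ?case
      by (cases "\<bar>w\<bar> \<le> 1") (auto simp: minpow_def g_def abs_if indicator_def min.coboundedI1 min.coboundedI2)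
  qed
  then have "(\<integral>\<^sup>+w. minpow e1 e2 w \<partial>lborel) \<le> (\<integral>\<^sup>+w. g w + g (0 - w) \<partial>lborel)"
    by (rule nn_integral_mono_AE)
  also have "\<dots> = 2 * (\<integral>\<^sup>+w. g w \<partial>lborel)"
    using nn_integral_reflect[of g 0] by (simp add: nn_integral_add mult_2)
  also have "(\<integral>\<^sup>+w. g w \<partial>lborel) = ennreal (1 / (1 - e1)) + ennreal (1 / (e2 - 1))"
    unfolding g_def using assms
    by (simp add: nn_integral_add nn_integral_powr_near_0 nn_integral_powr_at_top)
  finally show ?thesis
    by (rule le_less_trans) (simp add: ennreal_mult_less_top flip: ennreal_plus ennreal_mult)
qed

text \<open>A scaled tensor is the product of a profile evaluated
  at the time difference rescaled by \<open>r\<^sup>2\<close> and at every space coordinate rescaled by \<open>r\<close>;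
  this is the parabolic scaling under which the integrand is homogeneous.\<close>
definition scaled_tensor :: "(real \<Rightarrow> ennreal) \<Rightarrow> real \<Rightarrow> real \<Rightarrow> 'a::euclidean_space \<Rightarrow> ennreal" where
  "scaled_tensor \<phi> r \<tau> \<xi> = \<phi> (\<tau> / r\<^sup>2) * (\<Prod>i\<in>Basis. \<phi> ((\<xi> \<bullet> i) / r))"

definition space_time_integral ::
  "real set \<Rightarrow> 'a::euclidean_space set \<Rightarrow> (real \<Rightarrow> real \<Rightarrow> 'a \<Rightarrow> 'a \<Rightarrow> ennreal) \<Rightarrow> ennreal" where
  "space_time_integral I A f =
     (\<integral>\<^sup>+t\<in>I. \<integral>\<^sup>+s\<in>I. \<integral>\<^sup>+x\<in>A. \<integral>\<^sup>+y\<in>A. f t s x y \<partial>lborel \<partial>lborel \<partial>lborel \<partial>lborel)"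

lemma space_time_integral_mono:
  assumes "\<And>t s x y. t \<in> I \<Longrightarrow> s \<in> I \<Longrightarrow> x \<in> A \<Longrightarrow> y \<in> A \<Longrightarrow> f t s x y \<le> g t s x y"
  shows "space_time_integral I A f \<le> space_time_integral I A g"
  unfolding space_time_integral_def using assms
  by (intro nn_integral_mono) (auto split: split_indicator intro!: nn_integral_mono)

text \<open>Fubini over the coordinates of the space difference: each coordinate contributes \<open>r \<integral>\<phi>\<close>.\<close>
lemma scaled_tensor_integral:
  fixes x :: "'a::euclidean_space"
  assumes [measurable]: "\<phi> \<in> borel_measurable borel" and r: "r > 0"
  shows "(\<integral>\<^sup>+y. scaled_tensor \<phi> r \<tau> (x - y) \<partial>lborel)
       = \<phi> (\<tau> / r\<^sup>2) * (ennreal r * (\<integral>\<^sup>+w. \<phi> w \<partial>lborel)) ^ DIM('a)"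
proof -
  have "(\<integral>\<^sup>+y. (\<Prod>i\<in>Basis. \<phi> (((x - y) \<bullet> i) / r)) \<partial>lborel)
      = (\<integral>\<^sup>+y. (\<Prod>i\<in>Basis. (\<lambda>i w. \<phi> ((x \<bullet> i - w) / r)) i (y \<bullet> i)) \<partial>lborel)"
    by (simp add: inner_diff_left)
  also have "\<dots> = (\<Prod>i\<in>(Basis::'a set). \<integral>\<^sup>+w. \<phi> ((x \<bullet> i - w) / r) \<partial>lborel)"
    by (rule nn_integral_lborel_prod) auto
  also have "\<dots> = (\<Prod>i\<in>(Basis::'a set). ennreal r * (\<integral>\<^sup>+w. \<phi> w \<partial>lborel))"
    using nn_integral_reflect[of "\<lambda>w. \<phi> (w / r)"] nn_integral_rescale[OF _ r] by simp
  finally show ?thesis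
    unfolding scaled_tensor_def by (simp add: nn_integral_cmult)
qed

text \<open>Integration in space: for a fixed time difference \<open>\<tau>\<close>, the inner integral over \<open>y\<close> is bounded
  by the integral over the whole space, and the outer integral over \<open>x \<in> A\<close> contributes \<open>|A|\<close>.\<close>
lemma space_integral_tensor_sum:
  fixes A :: "'a::euclidean_space set"
  assumes "finite S" and [measurable]: "\<And>j. \<phi> j \<in> borel_measurable borel"
    and r: "\<And>j. r j > 0" and [measurable]: "A \<in> sets lborel"
  shows "(\<integral>\<^sup>+x\<in>A. \<integral>\<^sup>+y\<in>A. (\<Sum>j\<in>S. c j * scaled_tensor (\<phi> j) (r j) \<tau> (x - y)) \<partial>lborel \<partial>lborel)
    \<le> emeasure lborel A * (\<Sum>j\<in>S. c j * \<phi> j (\<tau> / (r j)\<^sup>2) * (ennreal (r j) * (\<integral>\<^sup>+w. \<phi> j w \<partial>lborel)) ^ DIM('a))"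
    (is "_ \<le> _ * ?B")
proof -
  have y_int: "(\<integral>\<^sup>+y\<in>A. (\<Sum>j\<in>S. c j * scaled_tensor (\<phi> j) (r j) \<tau> (x - y)) \<partial>lborel) \<le> ?B" for x
  proof -
    have [measurable]: "(\<lambda>y. scaled_tensor (\<phi> j) (r j) \<tau> (x - y)) \<in> borel_measurable lborel" for j
      unfolding scaled_tensor_def by measurable
    have "(\<integral>\<^sup>+y\<in>A. (\<Sum>j\<in>S. c j * scaled_tensor (\<phi> j) (r j) \<tau> (x - y)) \<partial>lborel)
        \<le> (\<integral>\<^sup>+y. (\<Sum>j\<in>S. c j * scaled_tensor (\<phi> j) (r j) \<tau> (x - y)) \<partial>lborel)"
      by (intro nn_integral_mono) (auto split: split_indicator)
    also have "\<dots> = ?B"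
      using assms(1) r by (simp add: nn_integral_sum nn_integral_cmult scaled_tensor_integral mult.assoc)
    finally show ?thesis .
  qed
  have "(\<integral>\<^sup>+x\<in>A. \<integral>\<^sup>+y\<in>A. (\<Sum>j\<in>S. c j * scaled_tensor (\<phi> j) (r j) \<tau> (x - y)) \<partial>lborel \<partial>lborel)
      \<le> (\<integral>\<^sup>+x. ?B * indicator A x \<partial>lborel)"
    by (intro nn_integral_mono mult_right_mono y_int) auto
  also have "\<dots> = emeasure lborel A * ?B"
    using assms(4) nn_integral_cmult_indicator[of A lborel ?B] by (simp add: mult.commute)
  finally show ?thesis .
qed

text \<open>Main integration lemma: the space-time integral of a finite sum of tensors of differences is
  bounded by \<open>|I| |A|\<close> times the sum of their weights \<open>c r^(k+2) (\<integral>\<phi>)^(k+1)\<close>; the time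
  difference is integrated over the whole line, contributing \<open>r\<^sup>2 \<integral>\<phi>\<close>.\<close>
lemma space_time_integral_tensor_sum:
  fixes A :: "'a::euclidean_space set"
  assumes "finite S" and [measurable]: "\<And>j. \<phi> j \<in> borel_measurable borel"
    and r: "\<And>j. r j > 0" and "t1 \<le> t2" and [measurable]: "A \<in> sets lborel"
  shows "space_time_integral {t1..t2} A
           (\<lambda>t s x y. \<Sum>j\<in>S. c j * scaled_tensor (\<phi> j) (r j) (t - s) (x - y))
     \<le> ennreal (t2 - t1) * emeasure lborel A *
         (\<Sum>j\<in>S. c j * ennreal (r j ^ (DIM('a) + 2)) * (\<integral>\<^sup>+w. \<phi> j w \<partial>lborel) ^ (DIM('a) + 1))"
    (is "_ \<le> _ * _ * (\<Sum>j\<in>S. ?W j)")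
proof -
  define B where "B j = (ennreal (r j) * (\<integral>\<^sup>+w. \<phi> j w \<partial>lborel)) ^ DIM('a)" for j
  have weight: "c j * (ennreal ((r j)\<^sup>2) * (\<integral>\<^sup>+w. \<phi> j w \<partial>lborel)) * B j = ?W j" for j
  proof -
    have e: "ennreal (r j ^ (DIM('a) + 2)) = ennreal ((r j)\<^sup>2) * ennreal (r j) ^ DIM('a)"
      using r[of j] by (simp add: ennreal_power power_add power2_eq_square flip: ennreal_mult)
    have p: "(\<integral>\<^sup>+w. \<phi> j w \<partial>lborel) ^ (DIM('a) + 1)
        = (\<integral>\<^sup>+w. \<phi> j w \<partial>lborel) * (\<integral>\<^sup>+w. \<phi> j w \<partial>lborel) ^ DIM('a)"
      by simp
    show ?thesis unfolding B_def power_mult_distrib e p by (simp only: mult_ac)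
  qed
  have time: "(\<integral>\<^sup>+s. \<phi> j ((t - s) / (r j)\<^sup>2) \<partial>lborel) = ennreal ((r j)\<^sup>2) * (\<integral>\<^sup>+w. \<phi> j w \<partial>lborel)" for j t
    using nn_integral_reflect[of "\<lambda>w. \<phi> j (w / (r j)\<^sup>2)" t] nn_integral_rescale[of "\<phi> j" "(r j)\<^sup>2"] r[of j]
    by simp
  have s_int: "(\<integral>\<^sup>+s\<in>{t1..t2}. \<integral>\<^sup>+x\<in>A. \<integral>\<^sup>+y\<in>A.
        (\<Sum>j\<in>S. c j * scaled_tensor (\<phi> j) (r j) (t - s) (x - y)) \<partial>lborel \<partial>lborel \<partial>lborel)
      \<le> emeasure lborel A * (\<Sum>j\<in>S. ?W j)" for t
  proof -
    have "(\<integral>\<^sup>+s\<in>{t1..t2}. \<integral>\<^sup>+x\<in>A. \<integral>\<^sup>+y\<in>A.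
          (\<Sum>j\<in>S. c j * scaled_tensor (\<phi> j) (r j) (t - s) (x - y)) \<partial>lborel \<partial>lborel \<partial>lborel)
        \<le> (\<integral>\<^sup>+s. emeasure lborel A * (\<Sum>j\<in>S. c j * \<phi> j ((t - s) / (r j)\<^sup>2) * B j) \<partial>lborel)"
      using space_integral_tensor_sum[OF assms(1,2) r assms(5)]
      by (intro nn_integral_mono) (auto simp: B_def split: split_indicator)
    also have "\<dots> = emeasure lborel A * (\<Sum>j\<in>S. c j * (ennreal ((r j)\<^sup>2) * (\<integral>\<^sup>+w. \<phi> j w \<partial>lborel)) * B j)"
      using assms(1) by (simp add: nn_integral_cmult nn_integral_sum nn_integral_multc time)
    finally show ?thesis by (simp only: weight)
  qed
  have "space_time_integral {t1..t2} A
          (\<lambda>t s x y. \<Sum>j\<in>S. c j * scaled_tensor (\<phi> j) (r j) (t - s) (x - y))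
      \<le> (\<integral>\<^sup>+t. emeasure lborel A * (\<Sum>j\<in>S. ?W j) * indicator {t1..t2} t \<partial>lborel)"
    unfolding space_time_integral_def by (intro nn_integral_mono mult_right_mono s_int) auto
  also have "\<dots> = ennreal (t2 - t1) * emeasure lborel A * (\<Sum>j\<in>S. ?W j)"
    using assms(4) nn_integral_cmult_indicator[of "{t1..t2}" lborel "emeasure lborel A * (\<Sum>j\<in>S. ?W j)"]
    by (simp only: sets_lborel atLeastAtMost_borel emeasure_lborel_Icc mult_ac)
  finally show ?thesis .
qed

definition parabolic_norm :: "real \<Rightarrow> 'a::real_normed_vector \<Rightarrow> real" where
  "parabolic_norm \<tau> \<xi> = max (sqrt \<bar>\<tau>\<bar>) (norm \<xi>)"

lemma parabolic_norm_nonneg: "parabolic_norm \<tau> \<xi> \<ge> 0"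
  by (simp add: parabolic_norm_def le_max_iff_disj)

lemma parabolic_norm_bounds:
  fixes \<xi> :: "'a::euclidean_space"
  shows "\<bar>\<tau>\<bar> \<le> (parabolic_norm \<tau> \<xi>)\<^sup>2" and "i \<in> Basis \<Longrightarrow> \<bar>\<xi> \<bullet> i\<bar> \<le> parabolic_norm \<tau> \<xi>"
proof -
  have "sqrt \<bar>\<tau>\<bar> \<le> parabolic_norm \<tau> \<xi>" by (simp add: parabolic_norm_def)
  then have "(sqrt \<bar>\<tau>\<bar>)\<^sup>2 \<le> (parabolic_norm \<tau> \<xi>)\<^sup>2" by (rule power_mono) simp
  then show "\<bar>\<tau>\<bar> \<le> (parabolic_norm \<tau> \<xi>)\<^sup>2" by simp
  assume "i \<in> Basis"
  then have "\<bar>\<xi> \<bullet> i\<bar> \<le> norm \<xi>" by (rule Basis_le_norm)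
  then show "\<bar>\<xi> \<bullet> i\<bar> \<le> parabolic_norm \<tau> \<xi>" by (simp add: parabolic_norm_def)
qed

lemma min_powr_select:
  fixes \<sigma> :: real
  assumes "\<sigma> > 0" "e1 \<le> e2" "c \<ge> 0"
  shows "min (\<sigma> powr (- (c * e1))) (\<sigma> powr (- (c * e2))) = \<sigma> powr (- (c * (if \<sigma> \<le> 1 then e1 else e2)))"
proof -
  have ce: "- (c * e2) \<le> - (c * e1)" using assms by (simp add: mult_left_mono)
  show ?thesis
  proof (cases "\<sigma> \<le> 1")
    case True
    then have "\<sigma> powr (- (c * e1)) \<le> \<sigma> powr (- (c * e2))" using powr_mono' ce assms(1) by simp
    then show ?thesis using True by simp
  next
    case False
    then have "\<sigma> powr (- (c * e2)) \<le> \<sigma> powr (- (c * e1))" using powr_mono ce by simp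
    then show ?thesis using False by simp
  qed
qed

lemma minpow_lower:
  assumes "\<bar>w\<bar> \<le> s" "s > 0" "0 \<le> e1" "e1 \<le> e2"
  shows "ennreal (min (s powr (-e1)) (s powr (-e2))) \<le> minpow e1 e2 w"
proof (cases "w = 0")
  case False
  then have "s powr (-e1) \<le> \<bar>w\<bar> powr (-e1)" "s powr (-e2) \<le> \<bar>w\<bar> powr (-e2)"
    using assms by (auto intro: powr_mono2')
  then show ?thesis using False by (simp add: minpow_def min.coboundedI1 min.coboundedI2)
qed (simp add: minpow_def)

text \<open>Tensor domination: a two-regime power of the rescaled parabolic norm \<open>\<sigma>\<close> is bounded by the
  scaled tensor of the corresponding profile, since the time factor sees \<open>\<sigma>\<^sup>2\<close> and each of the
  \<open>k\<close> space factors sees \<open>\<sigma>\<close>, for a total homogeneity \<open>n = k + 2\<close>.\<close>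
lemma scaled_tensor_minpow_lower:
  fixes \<xi> :: "'a::euclidean_space" and \<tau> r :: real
  defines "\<sigma> \<equiv> parabolic_norm \<tau> \<xi> / r" and "n \<equiv> real DIM('a) + 2"
  assumes e: "0 \<le> e1" "e1 \<le> e2" and r: "r > 0" and \<rho>: "parabolic_norm \<tau> \<xi> > 0"
  shows "ennreal (min (\<sigma> powr (- (n * e1))) (\<sigma> powr (- (n * e2)))) \<le> scaled_tensor (minpow e1 e2) r \<tau> \<xi>"
proof -
  define e where "e = (if \<sigma> \<le> 1 then e1 else e2)"
  have \<sigma>: "\<sigma> > 0" using r \<rho> by (simp add: \<sigma>_def)
  have sel: "min (\<sigma> powr (- (c * e1))) (\<sigma> powr (- (c * e2))) = \<sigma> powr (- (c * e))" if "c \<ge> 0" for c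
    using min_powr_select[OF \<sigma> e(2) that] by (simp add: e_def)
  have time: "ennreal (\<sigma> powr (- (2 * e))) \<le> minpow e1 e2 (\<tau> / r\<^sup>2)"
  proof -
    have "\<bar>\<tau> / r\<^sup>2\<bar> \<le> \<sigma>\<^sup>2"
      using parabolic_norm_bounds(1)[of \<tau> \<xi>] r by (simp add: \<sigma>_def power_divide divide_right_mono)
    from minpow_lower[OF this _ e] \<sigma> have "ennreal (min ((\<sigma>\<^sup>2) powr (-e1)) ((\<sigma>\<^sup>2) powr (-e2))) \<le> minpow e1 e2 (\<tau> / r\<^sup>2)"
      by simp
    moreover have "(\<sigma>\<^sup>2) powr x = \<sigma> powr (2 * x)" for x
      using \<sigma> by (simp add: powr_powr flip: powr_numeral)
    ultimately show ?thesis using sel[of 2] by simp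
  qed
  have space: "ennreal (\<sigma> powr (- e)) \<le> minpow e1 e2 ((\<xi> \<bullet> i) / r)" if "i \<in> Basis" for i
  proof -
    have "\<bar>(\<xi> \<bullet> i) / r\<bar> \<le> \<sigma>"
      using parabolic_norm_bounds(2)[OF that, of \<xi> \<tau>] r by (simp add: \<sigma>_def divide_right_mono)
    from minpow_lower[OF this \<sigma> e] show ?thesis using sel[of 1] by simp
  qed
  have "\<sigma> powr (- (n * e)) = \<sigma> powr (- (2 * e)) * (\<sigma> powr (- e)) ^ DIM('a)"
  proof -
    have "(\<sigma> powr (- e)) ^ DIM('a) = \<sigma> powr (real DIM('a) * (- e))"
      using \<sigma> by (simp add: powr_power)
    then show ?thesis by (simp add: n_def algebra_simps flip: powr_add)
  qed
  then have "ennreal (\<sigma> powr (- (n * e))) = ennreal (\<sigma> powr (- (2 * e))) * (\<Prod>i\<in>(Basis::'a set). ennreal (\<sigma> powr (- e)))"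
    by (simp add: ennreal_mult' ennreal_power)
  also have "\<dots> \<le> scaled_tensor (minpow e1 e2) r \<tau> \<xi>"
    unfolding scaled_tensor_def by (intro mult_mono time prod_mono_ennreal space) auto
  finally show ?thesis using sel[of n] by (simp add: n_def)
qed

text \<open>Local profiles \<open>|w|^-e\<close> on \<open>[-1, 1]\<close>: they dominate powers of the parabolic norm on the
  ball of radius \<open>r\<close> and are integrable for \<open>e < 1\<close>, with no condition at infinity.\<close>
definition local_profile :: "real \<Rightarrow> real \<Rightarrow> ennreal" where
  "local_profile e w = minpow e e w * indicator {-1..1} w"

lemma local_profile_measurable [measurable]: "local_profile e \<in> borel_measurable borel"
  unfolding local_profile_def by measurable

lemma local_profile_integrable:
  assumes "e < 1"
  shows "(\<integral>\<^sup>+w. local_profile e w \<partial>lborel) < \<infinity>"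
proof -
  have "local_profile e w \<le> minpow e 2 w" for w
  proof (cases "w = 0 \<or> \<bar>w\<bar> > 1")
    case False
    then have "\<bar>w\<bar> powr (-e) \<le> \<bar>w\<bar> powr (-2)"
      using assms by (intro powr_mono') auto
    then show ?thesis using False by (auto simp: local_profile_def minpow_def indicator_def)
  qed (auto simp: local_profile_def minpow_def indicator_def)
  then have "(\<integral>\<^sup>+w. local_profile e w \<partial>lborel) \<le> (\<integral>\<^sup>+w. minpow e 2 w \<partial>lborel)"
    by (intro nn_integral_mono)
  also have "\<dots> < \<infinity>" using minpow_integrable[of e 2] assms by simp
  finally show ?thesis .
qed

lemma scaled_tensor_local_lower:
  fixes \<xi> :: "'a::euclidean_space" and \<tau> r :: real
  assumes e: "0 \<le> e" and \<rho>: "0 < parabolic_norm \<tau> \<xi>" "parabolic_norm \<tau> \<xi> \<le> r"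
  shows "ennreal ((parabolic_norm \<tau> \<xi> / r) powr (- ((real DIM('a) + 2) * e)))
    \<le> scaled_tensor (local_profile e) r \<tau> \<xi>"
proof -
  have r: "r > 0" using \<rho> by linarith
  have "\<bar>\<tau>\<bar> \<le> r\<^sup>2"
    using parabolic_norm_bounds(1)[of \<tau> \<xi>] power_mono[OF \<rho>(2) parabolic_norm_nonneg, of 2] by linarith
  then have time: "indicator {-1..1} (\<tau> / r\<^sup>2) = (1::ennreal)"
    using r by (simp add: indicator_def abs_le_iff field_simps)
  have space: "indicator {-1..1} ((\<xi> \<bullet> i) / r) = (1::ennreal)" if "i \<in> Basis" for i
    using parabolic_norm_bounds(2)[OF that, of \<xi> \<tau>] \<rho> r
    by (simp add: indicator_def abs_le_iff field_simps)
  have "scaled_tensor (local_profile e) r \<tau> \<xi> = scaled_tensor (minpow e e) r \<tau> \<xi>"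
    unfolding scaled_tensor_def local_profile_def time by (simp add: space)
  then show ?thesis
    using scaled_tensor_minpow_lower[OF e order_refl r \<rho>(1)] by simp
qed

lemma dyadic_shell:
  fixes u :: real
  assumes "1 < u" "u \<le> 2 ^ K"
  shows "\<exists>j<K. 2 ^ j < u \<and> u \<le> 2 ^ (j + 1)"
  using assms(2)
proof (induction K)
  case (Suc K)
  show ?case
  proof (cases "u \<le> 2 ^ K")
    case True then show ?thesis using Suc.IH less_SucI by blast
  next
    case False then show ?thesis using Suc.prems by auto
  qed
qed (use assms(1) in simp)

text \<open>The number of dyadic shells needed to go from the scale \<open>(a/2)^(2/\<gamma>)\<close> up to \<open>R\<close> is
  \<open>O(ln (N0 / a))\<close>, uniformly for \<open>2a \<le> N0\<close>.\<close>
lemma dyadic_cover_count: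
  fixes \<gamma> R a N0 :: real
  assumes "\<gamma> > 0" "R > 0" "a > 0" "2 * a \<le> N0" "1 \<le> N0"
  shows "\<exists>K::nat. R \<le> 2 ^ K * (a / 2) powr (2 / \<gamma>) \<and>
    real K \<le> ((\<bar>log 2 R\<bar> + 2 / \<gamma> + 1) / ln 2 + 2 / (\<gamma> * ln 2)) * ln (N0 / a)"
proof -
  define \<rho>0 where "\<rho>0 = (a / 2) powr (2 / \<gamma>)"
  define l where "l = ln (N0 / a)"
  define K where "K = nat \<lceil>log 2 (R / \<rho>0)\<rceil>"
  have \<rho>0: "\<rho>0 > 0" using assms by (simp add: \<rho>0_def)
  have "log 2 (R / \<rho>0) \<le> real K" unfolding K_def by linarith
  then have "R / \<rho>0 \<le> 2 ^ K" using assms \<rho>0 by (simp add: log_le_iff powr_realpow)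
  then have cover: "R \<le> 2 ^ K * \<rho>0" using \<rho>0 by (simp add: field_simps)
  have l2: "ln 2 \<le> l" unfolding l_def using assms by (intro ln_mono) (auto simp: field_simps)
  have ln_a: "- ln a \<le> l"
    using assms by (simp add: l_def ln_div)
  have "log 2 (R / \<rho>0) = log 2 R + 2 / \<gamma> - 2 / \<gamma> * (ln a / ln 2)"
    using assms by (simp add: \<rho>0_def log_divide log_powr log_def ln_div field_simps)
  also have "\<dots> \<le> \<bar>log 2 R\<bar> + 2 / \<gamma> + 2 / (\<gamma> * ln 2) * l"
  proof -
    have "2 / (\<gamma> * ln 2) * (- ln a) \<le> 2 / (\<gamma> * ln 2) * l"
      using ln_a assms by (intro mult_left_mono) auto
    then show ?thesis by (simp add: field_simps)
  qed
  finally have log_le: "log 2 (R / \<rho>0) \<le> \<bar>log 2 R\<bar> + 2 / \<gamma> + 2 / (\<gamma> * ln 2) * l" .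
  have "real K \<le> max 0 (log 2 (R / \<rho>0)) + 1" unfolding K_def by linarith
  moreover have "0 \<le> 2 / (\<gamma> * ln 2) * l"
  proof -
    have "0 < ln (2::real)" by simp
    then have "0 \<le> l" using l2 by linarith
    then show ?thesis using assms by simp
  qed
  ultimately have "real K \<le> (\<bar>log 2 R\<bar> + 2 / \<gamma> + 1) + 2 / (\<gamma> * ln 2) * l"
    using log_le assms by (smt (verit) divide_pos_pos)
  also have "\<dots> \<le> (\<bar>log 2 R\<bar> + 2 / \<gamma> + 1) / ln 2 * l + 2 / (\<gamma> * ln 2) * l"
  proof -
    have "1 \<le> l / ln 2" using l2 by simp
    from mult_left_mono[OF this, of "\<bar>log 2 R\<bar> + 2 / \<gamma> + 1"] assms show ?thesis by simp
  qed
  finally show ?thesis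
    using cover unfolding \<rho>0_def l_def by (auto simp: algebra_simps)
qed

lemma integrand_on_diagonal:
  "parabolic_norm (t - s) (x - y) = 0 \<Longrightarrow> integrand b \<gamma> \<gamma>' d p a t s x y = 0"
  by (auto simp: parabolic_norm_def integrand_def max_def split: if_splits)

lemma integrand_parabolic_bounds:
  fixes x y :: "'a::real_normed_vector" and t s \<gamma> :: real
  defines "\<rho> \<equiv> parabolic_norm (t - s) (x - y)"
    and "U \<equiv> \<bar>t - s\<bar> powr (\<gamma> / 4) + norm (x - y) powr (\<gamma> / 2)"
  assumes \<rho>: "\<rho> > 0" and pos: "\<gamma> > 0" "\<gamma>' > 0" "b > 0"
  shows "integrand b \<gamma> \<gamma>' d p a t s x y \<le> \<rho> powr (- (\<gamma>' * b / 2)) * trunc_ratio U a powr (p / (2 * real d))"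
    and "\<rho> powr (\<gamma> / 2) \<le> U" and "U \<le> 2 * \<rho> powr (\<gamma> / 2)"
proof -
  define u where "u = sqrt \<bar>t - s\<bar>"
  define v where "v = norm (x - y)"
  have \<rho>_eq: "\<rho> = max u v" by (simp add: \<rho>_def u_def v_def parabolic_norm_def)
  have sqrt_powr: "\<bar>t - s\<bar> powr c = u powr (2 * c)" for c
    by (simp add: u_def powr_half_sqrt[symmetric] powr_powr)
  have "\<rho> powr \<gamma>' \<le> u powr \<gamma>' + v powr \<gamma>'"
    unfolding \<rho>_eq by (cases "u \<le> v") (auto simp: max_def)
  then have "(\<bar>t - s\<bar> powr (\<gamma>' / 2) + v powr \<gamma>') powr (- b / 2) \<le> (\<rho> powr \<gamma>') powr (- b / 2)"
    unfolding sqrt_powr using pos \<rho> by (intro powr_mono2') auto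
  also have "\<dots> = \<rho> powr (- (\<gamma>' * b / 2))" by (simp add: powr_powr)
  finally show "integrand b \<gamma> \<gamma>' d p a t s x y \<le> \<rho> powr (- (\<gamma>' * b / 2)) * trunc_ratio U a powr (p / (2 * real d))"
    unfolding integrand_def U_def v_def by (rule mult_right_mono) simp
  show "\<rho> powr (\<gamma> / 2) \<le> U"
    unfolding U_def sqrt_powr \<rho>_eq by (cases "u \<le> v") (auto simp: max_def v_def)
  have "u powr (\<gamma> / 2) \<le> \<rho> powr (\<gamma> / 2)" "v powr (\<gamma> / 2) \<le> \<rho> powr (\<gamma> / 2)"
    unfolding \<rho>_eq using pos by (auto intro: powr_mono2 simp: u_def v_def)
  then show "U \<le> 2 * \<rho> powr (\<gamma> / 2)"
    unfolding U_def sqrt_powr v_def by simp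
qed

lemma trunc_ratio_le_one: "U \<ge> 0 \<Longrightarrow> a \<ge> 0 \<Longrightarrow> 0 \<le> trunc_ratio U a \<and> trunc_ratio U a \<le> 1"
  by (auto simp: trunc_ratio_def)

lemma trunc_ratio_comparable:
  assumes "a > 0" "0 < Y" "Y \<le> U" "U \<le> 2 * Y"
  shows "min (Y / a) 1 \<le> trunc_ratio U a" and "trunc_ratio U a \<le> min (2 * Y / a) 1"
  using assms by (auto simp: trunc_ratio_def min_def divide_right_mono)

lemma powr_min_one:
  fixes X r :: real
  assumes "X \<ge> 0" "r > 0"
  shows "min X 1 powr r = min (X powr r) 1"
proof (cases "X \<le> 1")
  case True
  then have "X powr r \<le> 1" using assms powr_mono2[of r X 1] by simp
  then show ?thesis using True by (simp add: min_def)
next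
  case False
  then have "1 \<le> X powr r" using assms by (simp add: ge_one_powr_ge_zero)
  then show ?thesis using False by (simp add: min_def)
qed

lemma powr_mult_min:
  fixes \<sigma> :: real assumes "\<sigma> > 0"
  shows "\<sigma> powr c * min (\<sigma> powr x) (\<sigma> powr y) = min (\<sigma> powr (c + x)) (\<sigma> powr (c + y))"
  using assms by (simp add: min_def powr_add)

lemma powr_le_rescale:
  fixes \<rho> R :: real
  assumes "0 < \<rho>" "\<rho> \<le> R" "e \<le> c"
  shows "\<rho> powr (- e) \<le> R powr (c - e) * \<rho> powr (- c)"
proof -
  have "\<rho> powr (- e) = \<rho> powr (c - e) * \<rho> powr (- c)" by (simp flip: powr_add)
  also have "\<dots> \<le> R powr (c - e) * \<rho> powr (- c)"
    using assms by (intro mult_right_mono powr_mono2) auto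
  finally show ?thesis .
qed

lemma ennreal_le_mult:
  assumes "x \<le> c * y" "0 \<le> c"
  shows "ennreal x \<le> ennreal c * ennreal y"
  using assms by (metis ennreal_leI ennreal_mult')

lemma finite_ennreal_bound:
  assumes "V < \<infinity>" shows "\<exists>C>0. V \<le> ennreal C"
proof (intro exI conjI)
  show "0 < enn2real V + 1" using enn2real_nonneg[of V] by linarith
  have "V = ennreal (enn2real V)" using assms by (simp add: ennreal_enn2real)
  also have "\<dots> \<le> ennreal (enn2real V + 1)" by (rule ennreal_leI) simp
  finally show "V \<le> ennreal (enn2real V + 1)" .
qed

text \<open>With \<open>n = k + 2\<close>, \<open>\<beta> = \<gamma>' b / 2\<close>, \<open>q = p / (2 d)\<close> and
  \<open>m = \<gamma> q / 2\<close>, the hypothesis on \<open>p\<close> reads \<open>m > \<beta> - n\<close>, and the exponent of the kernel is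
  \<open>\<alpha> = 2 (\<beta> - n) / \<gamma>\<close>; \<open>FF a\<close> is the integral to be estimated.\<close>
locale integrand_setting =
  fixes t1 t2 :: real and aJ bJ :: "'a::euclidean_space" and N b \<gamma> \<gamma>' p :: real and d :: nat
  assumes t12: "t1 < t2" and N_pos: "N > 0" and b_pos: "b > 0" and \<gamma>_pos: "\<gamma> > 0"
    and \<gamma>_less: "\<gamma> < \<gamma>'" and d_pos: "d \<ge> 1"
    and p_large: "p > 2 * real d / \<gamma> * (\<gamma>' * b - 2 * real DIM('a) - 4)"
begin

definition "n = real DIM('a) + 2"
definition "\<beta> = \<gamma>' * b / 2"
definition "q = p / (2 * real d)"
definition "m = \<gamma> * q / 2"
definition "\<alpha> = \<gamma>' / \<gamma> * b - (4 + 2 * real DIM('a)) / \<gamma>"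
definition "FF a = space_time_integral {t1..t2} (cbox aJ bJ)
                     (\<lambda>t s x y. ennreal (integrand b \<gamma> \<gamma>' d p a t s x y))"

abbreviation "\<rho> t s x y \<equiv> parabolic_norm (t - s) (x - y :: 'a)"

lemma \<gamma>'_pos: "\<gamma>' > 0" using \<gamma>_less \<gamma>_pos by simp
lemma \<beta>_pos: "\<beta> > 0" using \<gamma>'_pos b_pos by (simp add: \<beta>_def)
lemma n_pos: "n > 0" by (simp add: n_def)

lemma m_large: "m > \<beta> - n"
proof -
  have "p / (2 * real d) > (\<gamma>' * b - 2 * real DIM('a) - 4) / \<gamma>"
    using p_large d_pos \<gamma>_pos by (simp add: field_simps)
  then show ?thesis using \<gamma>_pos by (simp add: m_def q_def \<beta>_def n_def field_simps)
qed

lemma \<alpha>_eq: "\<alpha> = 2 * (\<beta> - n) / \<gamma>"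
  using \<gamma>_pos by (simp add: \<alpha>_def \<beta>_def n_def field_simps)

lemma domain_radius:
  obtains R where "R > 0"
    "\<And>t s x y. t \<in> {t1..t2} \<Longrightarrow> s \<in> {t1..t2} \<Longrightarrow> x \<in> cbox aJ bJ \<Longrightarrow> y \<in> cbox aJ bJ \<Longrightarrow> \<rho> t s x y \<le> R"
proof -
  obtain B where B: "B > 0" "\<And>x. x \<in> cbox aJ bJ \<Longrightarrow> norm x \<le> B"
    using bounded_cbox[of aJ bJ] unfolding bounded_pos by blast
  have "\<rho> t s x y \<le> max (sqrt (t2 - t1)) (2 * B)"
    if "t \<in> {t1..t2}" "s \<in> {t1..t2}" "x \<in> cbox aJ bJ" "y \<in> cbox aJ bJ" for t s x y
  proof -
    have "sqrt \<bar>t - s\<bar> \<le> sqrt (t2 - t1)" using that by auto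
    moreover have "norm (x - y) \<le> 2 * B"
      using norm_triangle_ineq4[of x y] B(2)[OF that(3)] B(2)[OF that(4)] by linarith
    ultimately show ?thesis unfolding parabolic_norm_def by (rule max.mono)
  qed
  moreover have "max (sqrt (t2 - t1)) (2 * B) > 0" using B by simp
  ultimately show ?thesis using that by blast
qed

text \<open>Reduction to weights: a pointwise domination of the integrand off the diagonal by a finite sum
  of tensors bounds \<open>FF a\<close> by the sum of their weights; \<open>tensor_volume \<phi>\<close> collects the factors
  of a weight that do not depend on the scale.\<close>
definition "tensor_volume \<phi> =
  ennreal (t2 - t1) * emeasure lborel (cbox aJ bJ) * (\<integral>\<^sup>+w. \<phi> w \<partial>lborel) ^ (DIM('a) + 1)"

lemma tensor_volume_finite: "(\<integral>\<^sup>+w. \<phi> w \<partial>lborel) < \<infinity> \<Longrightarrow> tensor_volume \<phi> < \<infinity>"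
  using emeasure_lborel_cbox_finite[of aJ bJ]
  by (simp add: tensor_volume_def ennreal_mult_less_top power_less_top_ennreal)

lemma FF_le_tensor_sum:
  assumes "finite S" and [measurable]: "\<And>j. \<phi> j \<in> borel_measurable borel" and r: "\<And>j. r j > 0"
    and dom: "\<And>t s x y. t \<in> {t1..t2} \<Longrightarrow> s \<in> {t1..t2} \<Longrightarrow> x \<in> cbox aJ bJ \<Longrightarrow> y \<in> cbox aJ bJ \<Longrightarrow>
      \<rho> t s x y > 0 \<Longrightarrow>
      ennreal (integrand b \<gamma> \<gamma>' d p a t s x y) \<le> (\<Sum>j\<in>S. c j * scaled_tensor (\<phi> j) (r j) (t - s) (x - y))"
  shows "FF a \<le> (\<Sum>j\<in>S. c j * ennreal (r j ^ (DIM('a) + 2)) * tensor_volume (\<phi> j))"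
proof -
  have "FF a \<le> space_time_integral {t1..t2} (cbox aJ bJ)
           (\<lambda>t s x y. \<Sum>j\<in>S. c j * scaled_tensor (\<phi> j) (r j) (t - s) (x - y))"
    unfolding FF_def
  proof (rule space_time_integral_mono)
    fix t s x y assume "t \<in> {t1..t2}" "s \<in> {t1..t2}" "x \<in> cbox aJ bJ" "y \<in> cbox aJ bJ"
    then show "ennreal (integrand b \<gamma> \<gamma>' d p a t s x y) \<le> (\<Sum>j\<in>S. c j * scaled_tensor (\<phi> j) (r j) (t - s) (x - y))"
      using dom integrand_on_diagonal[of t s x y] parabolic_norm_nonneg[of "t - s" "x - y"]
      by (cases "\<rho> t s x y = 0") auto
  qed
  also have "\<dots> \<le> ennreal (t2 - t1) * emeasure lborel (cbox aJ bJ) *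
      (\<Sum>j\<in>S. c j * ennreal (r j ^ (DIM('a) + 2)) * (\<integral>\<^sup>+w. \<phi> j w \<partial>lborel) ^ (DIM('a) + 1))"
    using t12 by (intro space_time_integral_tensor_sum assms) auto
  also have "\<dots> = (\<Sum>j\<in>S. c j * ennreal (r j ^ (DIM('a) + 2)) * tensor_volume (\<phi> j))"
    by (simp add: tensor_volume_def sum_distrib_left mult_ac)
  finally show ?thesis .
qed

lemma FF_le_tensor:
  assumes [measurable]: "\<phi> \<in> borel_measurable borel" and r: "r > 0"
    and dom: "\<And>t s x y. t \<in> {t1..t2} \<Longrightarrow> s \<in> {t1..t2} \<Longrightarrow> x \<in> cbox aJ bJ \<Longrightarrow> y \<in> cbox aJ bJ \<Longrightarrow>
      \<rho> t s x y > 0 \<Longrightarrow> ennreal (integrand b \<gamma> \<gamma>' d p a t s x y) \<le> c * scaled_tensor \<phi> r (t - s) (x - y)"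
  shows "FF a \<le> c * ennreal (r ^ (DIM('a) + 2)) * tensor_volume \<phi>"
  using FF_le_tensor_sum[of "{()}" "\<lambda>_. \<phi>" "\<lambda>_. r" a "\<lambda>_. c"] assms by simp

text \<open>For \<open>a > 0\<close> the truncation switches at the scale \<open>\<rho>0 = (a/2)^(2/\<gamma>)\<close>: the integrand is at
  most \<open>\<rho>^-\<beta> min ((\<rho>/\<rho>0)^m') 1\<close> for every \<open>0 < m' \<le> m\<close>.\<close>
lemma integrand_near_diagonal:
  assumes a: "a > 0" and \<rho>: "\<rho> t s x y > 0" and m': "0 < m'" "m' \<le> m"
  shows "integrand b \<gamma> \<gamma>' d p a t s x y
    \<le> \<rho> t s x y powr (- \<beta>) * min ((\<rho> t s x y / (a / 2) powr (2 / \<gamma>)) powr m') 1"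
proof -
  define \<rho>0 where "\<rho>0 = (a / 2) powr (2 / \<gamma>)"
  define q' where "q' = 2 * m' / \<gamma>"
  define U where "U = \<bar>t - s\<bar> powr (\<gamma> / 4) + norm (x - y) powr (\<gamma> / 2)"
  define T where "T = trunc_ratio U a"
  define Y where "Y = \<rho> t s x y powr (\<gamma> / 2)"
  note bounds = integrand_parabolic_bounds[OF \<rho> \<gamma>_pos \<gamma>'_pos b_pos]
  have Y: "Y > 0" "Y \<le> U" "U \<le> 2 * Y" using bounds \<rho> by (auto simp: Y_def U_def)
  note T = trunc_ratio_comparable[OF a Y, folded T_def]
  have q': "0 < q'" "q' \<le> q" using m' \<gamma>_pos by (auto simp: q'_def m_def field_simps)
  have ratio: "2 * Y / a = (\<rho> t s x y / \<rho>0) powr (\<gamma> / 2)"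
    using a \<rho> \<gamma>_pos by (simp add: Y_def \<rho>0_def powr_divide powr_powr powr_mult)
  have "T powr q \<le> T powr q'"
    using T q' a Y by (intro powr_mono') (auto intro: order.strict_trans2[rotated])
  also have "\<dots> \<le> min (2 * Y / a) 1 powr q'"
    using T q' a Y by (intro powr_mono2) auto
  also have "\<dots> = min ((\<rho> t s x y / \<rho>0) powr m') 1"
    using a Y q' \<gamma>_pos by (simp add: powr_min_one ratio powr_powr q'_def)
  finally have "\<rho> t s x y powr (- \<beta>) * T powr q \<le> \<rho> t s x y powr (- \<beta>) * min ((\<rho> t s x y / \<rho>0) powr m') 1"
    by (rule mult_left_mono) simp
  moreover have "integrand b \<gamma> \<gamma>' d p a t s x y \<le> \<rho> t s x y powr (- \<beta>) * T powr q"
    using bounds(1) by (simp add: \<beta>_def q_def T_def U_def)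
  ultimately show ?thesis by (simp add: \<rho>0_def)
qed

text \<open>Uniformly in \<open>a \<in> [0, N]\<close>, the integrand is at most \<open>\<rho>^-\<beta> + N^-q \<rho>^(m-\<beta>)\<close>; the second
  term is only needed when \<open>q < 0\<close>.\<close>
lemma integrand_two_powers:
  assumes a: "a \<in> {0..N}" and \<rho>: "\<rho> t s x y > 0"
  shows "integrand b \<gamma> \<gamma>' d p a t s x y
    \<le> \<rho> t s x y powr (- \<beta>) + N powr (- q) * \<rho> t s x y powr (m - \<beta>)"
proof -
  define U where "U = \<bar>t - s\<bar> powr (\<gamma> / 4) + norm (x - y) powr (\<gamma> / 2)"
  define T where "T = trunc_ratio U a"
  define Y where "Y = \<rho> t s x y powr (\<gamma> / 2)"
  note bounds = integrand_parabolic_bounds[OF \<rho> \<gamma>_pos \<gamma>'_pos b_pos]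
  have Y: "Y > 0" "Y \<le> U" "U \<le> 2 * Y" using bounds \<rho> by (auto simp: Y_def U_def)
  have T: "0 \<le> T" "T \<le> 1" using trunc_ratio_le_one[of U a] Y a by (auto simp: T_def)
  have "T powr q \<le> 1 + N powr (- q) * \<rho> t s x y powr m"
  proof (cases "q \<ge> 0 \<or> a = 0")
    case True
    then have "T powr q \<le> 1" using T by (auto intro: powr_le1 simp: T_def trunc_ratio_def)
    moreover have "0 \<le> N powr (- q) * \<rho> t s x y powr m" by simp
    ultimately show ?thesis by linarith
  next
    case False
    then have q: "q < 0" and a0: "a > 0" using a by auto
    have low: "0 < min (Y / a) 1" "min (Y / a) 1 \<le> T"
      using trunc_ratio_comparable(1)[OF a0 Y] Y a0 by (auto simp: T_def)
    have "T powr q \<le> min (Y / a) 1 powr q" using q low by (intro powr_mono2') auto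
    also have "\<dots> \<le> 1 + (Y / a) powr q" by (cases "Y / a \<le> 1") (auto simp: min_def)
    also have "(Y / a) powr q = \<rho> t s x y powr m * a powr (- q)"
    proof -
      have "Y powr q = \<rho> t s x y powr m" by (simp add: Y_def m_def powr_powr)
      then show ?thesis using Y a0 by (simp add: powr_divide powr_minus_divide)
    qed
    also have "\<dots> \<le> \<rho> t s x y powr m * N powr (- q)"
      using q a0 a by (intro mult_left_mono powr_mono2) auto
    finally show ?thesis by (simp add: mult.commute)
  qed
  then have "\<rho> t s x y powr (- \<beta>) * T powr q
      \<le> \<rho> t s x y powr (- \<beta>) * (1 + N powr (- q) * \<rho> t s x y powr m)"
    by (rule mult_left_mono) simp
  moreover have "integrand b \<gamma> \<gamma>' d p a t s x y \<le> \<rho> t s x y powr (- \<beta>) * T powr q"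
    using bounds(1) by (simp add: \<beta>_def q_def T_def U_def)
  moreover have "\<rho> t s x y powr (- \<beta>) * (1 + N powr (- q) * \<rho> t s x y powr m)
      = \<rho> t s x y powr (- \<beta>) + N powr (- q) * \<rho> t s x y powr (m - \<beta>)"
    by (simp add: distrib_left mult.left_commute flip: powr_add)
  ultimately show ?thesis by linarith
qed

text \<open>Regime \<open>\<alpha> < 0\<close>: both exponents are below \<open>n\<close>, so one local tensor at the scale \<open>R\<close> of the
  domain gives a bound independent of \<open>a\<close>.\<close>
lemma FF_bound_subcritical:
  assumes "\<alpha> < 0"
  shows "\<exists>C>0. \<forall>a\<in>{0..N}. FF a \<le> ennreal C"
proof -
  obtain R where R: "R > 0"
    "\<And>t s x y. t \<in> {t1..t2} \<Longrightarrow> s \<in> {t1..t2} \<Longrightarrow> x \<in> cbox aJ bJ \<Longrightarrow> y \<in> cbox aJ bJ \<Longrightarrow> \<rho> t s x y \<le> R"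
    using domain_radius by blast
  define c where "c = max \<beta> (\<beta> - m)"
  define e where "e = c / n"
  define C1 where "C1 = (R powr (c - \<beta>) + N powr (- q) * R powr (c - (\<beta> - m))) * R powr (- c)"
  have c: "0 < c" "c < n" "\<beta> \<le> c" "\<beta> - m \<le> c"
    using assms m_large \<beta>_pos \<gamma>_pos by (auto simp: c_def \<alpha>_eq divide_less_0_iff)
  have e: "0 \<le> e" "e < 1" "n * e = c" using c n_pos by (auto simp: e_def)
  have pointwise: "ennreal (integrand b \<gamma> \<gamma>' d p a t s x y)
      \<le> ennreal C1 * scaled_tensor (local_profile e) R (t - s) (x - y)"
    if a: "a \<in> {0..N}" and \<rho>: "0 < \<rho> t s x y" "\<rho> t s x y \<le> R" for a t s x y
  proof -
    have "integrand b \<gamma> \<gamma>' d p a t s x y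
        \<le> \<rho> t s x y powr (- \<beta>) + N powr (- q) * \<rho> t s x y powr (- (\<beta> - m))"
      using integrand_two_powers[OF a \<rho>(1)] by simp
    also have "\<dots> \<le> R powr (c - \<beta>) * \<rho> t s x y powr (- c)
        + N powr (- q) * (R powr (c - (\<beta> - m)) * \<rho> t s x y powr (- c))"
      using \<rho> c by (intro add_mono mult_left_mono powr_le_rescale) auto
    also have "\<rho> t s x y powr (- c) = R powr (- c) * (\<rho> t s x y / R) powr (- (n * e))"
      using \<rho> R e(3) by (simp add: powr_divide)
    finally have "integrand b \<gamma> \<gamma>' d p a t s x y \<le> C1 * (\<rho> t s x y / R) powr (- (n * e))"
      by (simp add: C1_def algebra_simps)
    then have "ennreal (integrand b \<gamma> \<gamma>' d p a t s x y) \<le> ennreal C1 * ennreal ((\<rho> t s x y / R) powr (- (n * e)))"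
      by (rule ennreal_le_mult) (simp add: C1_def)
    also have "\<dots> \<le> ennreal C1 * scaled_tensor (local_profile e) R (t - s) (x - y)"
      using scaled_tensor_local_lower[OF e(1) \<rho>] by (intro mult_left_mono) (auto simp: n_def)
    finally show ?thesis .
  qed
  define V where "V = ennreal C1 * ennreal (R ^ (DIM('a) + 2)) * tensor_volume (local_profile e)"
  have "V < \<infinity>"
    using tensor_volume_finite[OF local_profile_integrable[OF e(2)]]
    by (simp add: V_def ennreal_mult_less_top)
  then obtain C where C: "C > 0" "V \<le> ennreal C" using finite_ennreal_bound by blast
  have "FF a \<le> V" if "a \<in> {0..N}" for a
    unfolding V_def using R pointwise[OF that] by (intro FF_le_tensor) auto
  with C show ?thesis by (meson order_trans)
qed

lemma powr_times_power:
  fixes r :: real assumes "r > 0"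
  shows "r powr (- c) * r ^ (DIM('a) + 2) = r powr (n - c)"
proof -
  have "r ^ (DIM('a) + 2) = r powr (real DIM('a) + 2)"
    using assms powr_realpow[of r "DIM('a) + 2"] by (simp add: add.commute)
  then show ?thesis by (simp add: n_def flip: powr_add)
qed

lemma switching_scale_power:
  assumes "a > 0"
  shows "((a / 2) powr (2 / \<gamma>)) powr (n - \<beta>) = 2 powr \<alpha> * a powr (- \<alpha>)"
proof -
  have "2 / \<gamma> * (n - \<beta>) = - \<alpha>" using \<gamma>_pos by (simp add: \<alpha>_eq field_simps)
  then have "((a / 2) powr (2 / \<gamma>)) powr (n - \<beta>) = (a / 2) powr (- \<alpha>)" by (simp add: powr_powr)
  also have "\<dots> = a powr (- \<alpha>) / 2 powr (- \<alpha>)" using assms by (simp add: powr_divide)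
  finally show ?thesis by (simp add: powr_minus field_simps)
qed

text \<open>Pointwise form of the regime \<open>\<alpha> > 0\<close>: with \<open>\<sigma> = \<rho>/\<rho>0\<close>, the bound \<open>\<rho>^-\<beta> min (\<sigma>^m') 1\<close> equals
  \<open>\<rho>0^-\<beta> min (\<sigma>^(m'-\<beta>)) (\<sigma>^-\<beta>)\<close>, a two-regime power dominated by one global tensor.\<close>
lemma integrand_switching_scale_domination:
  assumes a: "a > 0" and \<rho>0: "\<rho>0 = (a / 2) powr (2 / \<gamma>)" and \<rho>: "\<rho> t s x y > 0"
    and m': "0 < m'" "m' \<le> m" "m' \<le> \<beta>"
  shows "ennreal (integrand b \<gamma> \<gamma>' d p a t s x y)
    \<le> ennreal (\<rho>0 powr (- \<beta>)) * scaled_tensor (minpow ((\<beta> - m') / n) (\<beta> / n)) \<rho>0 (t - s) (x - y)"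
proof -
  define \<sigma> where "\<sigma> = \<rho> t s x y / \<rho>0"
  have \<rho>0_pos: "\<rho>0 > 0" using a by (simp add: \<rho>0)
  have \<sigma>: "\<sigma> > 0" using \<rho> \<rho>0_pos by (simp add: \<sigma>_def)
  have e: "0 \<le> (\<beta> - m') / n" "(\<beta> - m') / n \<le> \<beta> / n" "n * ((\<beta> - m') / n) = \<beta> - m'" "n * (\<beta> / n) = \<beta>"
    using m' n_pos by (auto simp: divide_right_mono)
  have "integrand b \<gamma> \<gamma>' d p a t s x y \<le> \<rho> t s x y powr (- \<beta>) * min (\<sigma> powr m') 1"
    using integrand_near_diagonal[OF a \<rho> m'(1,2)] by (simp add: \<sigma>_def \<rho>0)
  also have "\<rho> t s x y powr (- \<beta>) = \<rho>0 powr (- \<beta>) * \<sigma> powr (- \<beta>)"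
    using \<rho>0_pos \<sigma> by (simp add: \<sigma>_def powr_divide powr_minus inverse_eq_divide)
  also have "\<rho>0 powr (- \<beta>) * \<sigma> powr (- \<beta>) * min (\<sigma> powr m') 1
      = \<rho>0 powr (- \<beta>) * min (\<sigma> powr (- (n * ((\<beta> - m') / n)))) (\<sigma> powr (- (n * (\<beta> / n))))"
    using powr_mult_min[OF \<sigma>, of "- \<beta>" m' 0] e \<sigma> by (simp add: mult.assoc)
  finally have "ennreal (integrand b \<gamma> \<gamma>' d p a t s x y)
      \<le> ennreal (\<rho>0 powr (- \<beta>)) * ennreal (min (\<sigma> powr (- (n * ((\<beta> - m') / n)))) (\<sigma> powr (- (n * (\<beta> / n)))))"
    by (rule ennreal_le_mult) simp
  also have "\<dots> \<le> ennreal (\<rho>0 powr (- \<beta>)) * scaled_tensor (minpow ((\<beta> - m') / n) (\<beta> / n)) \<rho>0 (t - s) (x - y)"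
    using scaled_tensor_minpow_lower[OF e(1,2) \<rho>0_pos \<rho>] by (intro mult_left_mono) (auto simp: \<sigma>_def n_def)
  finally show ?thesis .
qed

text \<open>Regime \<open>\<alpha> > 0\<close>: with \<open>m' = min m \<beta>\<close> the exponents satisfy \<open>\<beta> - m' < n < \<beta>\<close>, so the profile is
  integrable and the weight of the tensor is \<open>\<rho>0^(n-\<beta>) = 2^\<alpha> a^-\<alpha>\<close>.\<close>
lemma FF_bound_supercritical:
  assumes "\<alpha> > 0"
  shows "\<exists>C>0. \<forall>a\<in>{0<..N}. FF a \<le> ennreal C * ennreal (a powr (- \<alpha>))"
proof -
  define m' where "m' = min m \<beta>"
  define \<phi> where "\<phi> = minpow ((\<beta> - m') / n) (\<beta> / n)"
  have \<beta>: "\<beta> > n" using assms \<gamma>_pos by (simp add: \<alpha>_eq zero_less_divide_iff)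
  have m': "0 < m'" "m' \<le> m" "m' \<le> \<beta>" "\<beta> - n < m'"
    using m_large \<beta> n_pos by (auto simp: m'_def)
  have "(\<integral>\<^sup>+w. \<phi> w \<partial>lborel) < \<infinity>"
    unfolding \<phi>_def using m' \<beta> n_pos by (intro minpow_integrable) (auto simp: field_simps)
  then obtain C0 where C0: "C0 > 0" "tensor_volume \<phi> \<le> ennreal C0"
    using tensor_volume_finite finite_ennreal_bound by blast
  have "FF a \<le> ennreal (C0 * 2 powr \<alpha>) * ennreal (a powr (- \<alpha>))" if a: "a \<in> {0<..N}" for a
  proof -
    define \<rho>0 where "\<rho>0 = (a / 2) powr (2 / \<gamma>)"
    have \<rho>0_pos: "\<rho>0 > 0" using a by (simp add: \<rho>0_def)
    have "FF a \<le> ennreal (\<rho>0 powr (- \<beta>)) * ennreal (\<rho>0 ^ (DIM('a) + 2)) * tensor_volume \<phi>"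
      using \<rho>0_pos integrand_switching_scale_domination[OF _ \<rho>0_def _ m'(1-3)] a
      by (intro FF_le_tensor) (auto simp: \<phi>_def)
    also have "ennreal (\<rho>0 powr (- \<beta>)) * ennreal (\<rho>0 ^ (DIM('a) + 2)) = ennreal (2 powr \<alpha> * a powr (- \<alpha>))"
      using powr_times_power[OF \<rho>0_pos, of \<beta>] switching_scale_power[of a] a
      by (simp add: \<rho>0_def flip: ennreal_mult')
    also have "ennreal (2 powr \<alpha> * a powr (- \<alpha>)) * tensor_volume \<phi> \<le> ennreal (C0 * 2 powr \<alpha>) * ennreal (a powr (- \<alpha>))"
    proof -
      have "ennreal (2 powr \<alpha> * a powr (- \<alpha>)) * tensor_volume \<phi> \<le> ennreal (2 powr \<alpha> * a powr (- \<alpha>)) * ennreal C0"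
        using C0 by (intro mult_left_mono) auto
      then show ?thesis using C0 by (simp add: ennreal_mult'[symmetric] mult_ac)
    qed
    finally show ?thesis .
  qed
  moreover have "C0 * 2 powr \<alpha> > 0" using C0 by simp
  ultimately show ?thesis by blast
qed

text \<open>Regime \<open>\<alpha> = 0\<close>, pointwise, inside the ball \<open>\<rho> \<le> \<rho>0\<close>: the integrand is at most
  \<open>\<rho>0^-n (\<rho>/\<rho>0)^-(n-m')\<close>, dominated by a local tensor at scale \<open>\<rho>0\<close>.\<close>
lemma integrand_critical_ball:
  assumes "\<alpha> = 0" and a: "a > 0" and \<rho>0: "\<rho>0 = (a / 2) powr (2 / \<gamma>)"
    and \<rho>: "0 < \<rho> t s x y" "\<rho> t s x y \<le> \<rho>0" and m': "0 < m'" "m' \<le> m" "m' \<le> n"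
  shows "ennreal (integrand b \<gamma> \<gamma>' d p a t s x y)
    \<le> ennreal (\<rho>0 powr (- n)) * scaled_tensor (local_profile ((n - m') / n)) \<rho>0 (t - s) (x - y)"
proof -
  define \<sigma> where "\<sigma> = \<rho> t s x y / \<rho>0"
  define e1 where "e1 = (n - m') / n"
  have \<rho>0_pos: "\<rho>0 > 0" using a by (simp add: \<rho>0)
  have \<sigma>: "\<sigma> > 0" using \<rho> \<rho>0_pos by (simp add: \<sigma>_def)
  have e1: "0 \<le> e1" "n * e1 = n - m'" using m' n_pos by (auto simp: e1_def)
  have "integrand b \<gamma> \<gamma>' d p a t s x y \<le> \<rho> t s x y powr (- n) * min (\<sigma> powr m') 1"
    using integrand_near_diagonal[OF a \<rho>(1) m'(1,2)] assms(1) \<gamma>_pos by (simp add: \<alpha>_eq \<sigma>_def \<rho>0)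
  also have "\<dots> \<le> \<rho> t s x y powr (- n) * \<sigma> powr m'"
    by (intro mult_left_mono) auto
  also have "\<rho> t s x y powr (- n) = \<rho>0 powr (- n) * \<sigma> powr (- n)"
    using \<rho>0_pos \<sigma> by (simp add: \<sigma>_def powr_divide powr_minus inverse_eq_divide)
  also have "\<rho>0 powr (- n) * \<sigma> powr (- n) * \<sigma> powr m' = \<rho>0 powr (- n) * \<sigma> powr (- (n * e1))"
    using e1(2) by (simp add: mult.assoc flip: powr_add)
  finally have "ennreal (integrand b \<gamma> \<gamma>' d p a t s x y) \<le> ennreal (\<rho>0 powr (- n)) * ennreal (\<sigma> powr (- (n * e1)))"
    by (rule ennreal_le_mult) simp
  also have "\<dots> \<le> ennreal (\<rho>0 powr (- n)) * scaled_tensor (local_profile e1) \<rho>0 (t - s) (x - y)"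
    using scaled_tensor_local_lower[OF e1(1) \<rho>] by (intro mult_left_mono) (auto simp: \<sigma>_def n_def)
  finally show ?thesis by (simp add: e1_def)
qed

text \<open>Regime \<open>\<alpha> = 0\<close>, pointwise, in the dyadic shell \<open>2^j \<rho>0 < \<rho> \<le> 2^(j+1) \<rho>0\<close>: the integrand is
  at most \<open>\<rho>^-n \<le> (2^j \<rho>0)^-n\<close> times the indicator tensor of the ball of radius \<open>2^(j+1) \<rho>0\<close>.\<close>
lemma integrand_critical_shell:
  assumes "\<alpha> = 0" and a: "a > 0" and \<rho>0: "\<rho>0 = (a / 2) powr (2 / \<gamma>)"
    and shell: "2 ^ j * \<rho>0 < \<rho> t s x y" "\<rho> t s x y \<le> 2 ^ (j + 1) * \<rho>0"
  shows "ennreal (integrand b \<gamma> \<gamma>' d p a t s x y)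
    \<le> ennreal ((2 ^ j * \<rho>0) powr (- n)) * scaled_tensor (local_profile 0) (2 ^ (j + 1) * \<rho>0) (t - s) (x - y)"
proof -
  have \<beta>: "\<beta> = n" using assms(1) \<gamma>_pos by (simp add: \<alpha>_eq)
  have \<rho>0_pos: "\<rho>0 > 0" using a by (simp add: \<rho>0)
  have "0 < 2 ^ j * \<rho>0" using \<rho>0_pos by simp
  with shell(1) have \<rho>: "0 < \<rho> t s x y" by linarith
  have m: "0 < m" using m_large \<beta> by simp
  have "integrand b \<gamma> \<gamma>' d p a t s x y \<le> \<rho> t s x y powr (- n) * min ((\<rho> t s x y / \<rho>0) powr m) 1"
    using integrand_near_diagonal[OF a \<rho> m order_refl] \<beta> by (simp add: \<rho>0)
  also have "\<dots> \<le> \<rho> t s x y powr (- n)"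
    using mult_left_mono[OF min.cobounded2, of "\<rho> t s x y powr (- n)" _ 1] by simp
  also have "\<dots> \<le> (2 ^ j * \<rho>0) powr (- n)"
    using shell \<rho>0_pos n_pos by (intro powr_mono2') auto
  finally have "ennreal (integrand b \<gamma> \<gamma>' d p a t s x y) \<le> ennreal ((2 ^ j * \<rho>0) powr (- n)) * ennreal 1"
    by (intro ennreal_le_mult) auto
  also have "\<dots> \<le> ennreal ((2 ^ j * \<rho>0) powr (- n)) * scaled_tensor (local_profile 0) (2 ^ (j + 1) * \<rho>0) (t - s) (x - y)"
    using scaled_tensor_local_lower[OF order_refl \<rho> shell(2)] \<rho> \<rho>0_pos by (intro mult_left_mono) auto
  finally show ?thesis .
qed

text \<open>Each shell has weight \<open>2^n\<close> times a fixed integral, independently of its radius.\<close>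
lemma tensor_weight:
  fixes r c :: real assumes "r > 0"
  shows "ennreal (r powr (- n)) * ennreal ((c * r) ^ (DIM('a) + 2)) = ennreal (c ^ (DIM('a) + 2))"
proof -
  have "r powr (- n) * (c * r) ^ (DIM('a) + 2) = c ^ (DIM('a) + 2) * (r powr (- n) * r ^ (DIM('a) + 2))"
    by (simp only: power_mult_distrib mult_ac)
  also have "\<dots> = c ^ (DIM('a) + 2)"
    using powr_times_power[OF assms, of n] assms by simp
  finally have eq: "r powr (- n) * (c * r) ^ (DIM('a) + 2) = c ^ (DIM('a) + 2)" .
  have "ennreal (r powr (- n)) * ennreal ((c * r) ^ (DIM('a) + 2)) = ennreal (r powr (- n) * (c * r) ^ (DIM('a) + 2))"
    by (rule ennreal_mult'[symmetric]) simp
  then show ?thesis by (simp only: eq)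
qed

text \<open>Regime \<open>\<alpha> = 0\<close>, integrated: if the domain lies in the ball of radius \<open>2^K \<rho>0\<close>, the central ball and
  the \<open>K\<close> shells together contribute \<open>K 2^n V0 + V1\<close>.\<close>
lemma FF_le_dyadic_sum:
  assumes \<alpha>: "\<alpha> = 0" and a: "a > 0" and \<rho>0: "\<rho>0 = (a / 2) powr (2 / \<gamma>)"
    and cover: "\<And>t s x y. t \<in> {t1..t2} \<Longrightarrow> s \<in> {t1..t2} \<Longrightarrow> x \<in> cbox aJ bJ \<Longrightarrow> y \<in> cbox aJ bJ \<Longrightarrow>
      \<rho> t s x y \<le> 2 ^ K * \<rho>0"
    and m': "0 < m'" "m' \<le> m" "m' \<le> n"
  shows "FF a \<le> of_nat K * ennreal (2 ^ (DIM('a) + 2)) * tensor_volume (local_profile 0)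
    + tensor_volume (local_profile ((n - m') / n))"
proof -
  have \<rho>0_pos: "\<rho>0 > 0" using a by (simp add: \<rho>0)
  define \<phi> where "\<phi> j = local_profile (if j < K then 0 else (n - m') / n)" for j
  define r where "r j = (if j < K then 2 * (2 ^ j * \<rho>0) else \<rho>0)" for j
  define c where "c j = ennreal ((if j < K then 2 ^ j * \<rho>0 else \<rho>0) powr (- n))" for j
  have "FF a \<le> (\<Sum>j<Suc K. c j * ennreal (r j ^ (DIM('a) + 2)) * tensor_volume (\<phi> j))"
  proof (rule FF_le_tensor_sum)
    fix t s x y assume dom: "t \<in> {t1..t2}" "s \<in> {t1..t2}" "x \<in> cbox aJ bJ" "y \<in> cbox aJ bJ"
      and \<rho>: "0 < \<rho> t s x y"
    have "\<exists>j<Suc K. ennreal (integrand b \<gamma> \<gamma>' d p a t s x y) \<le> c j * scaled_tensor (\<phi> j) (r j) (t - s) (x - y)"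
    proof (cases "\<rho> t s x y \<le> \<rho>0")
      case True
      then show ?thesis using integrand_critical_ball[OF \<alpha> a \<rho>0 \<rho> True m']
        by (intro exI[of _ K]) (simp add: c_def \<phi>_def r_def)
    next
      case False
      then obtain j where "j < K" "2 ^ j < \<rho> t s x y / \<rho>0" "\<rho> t s x y / \<rho>0 \<le> 2 ^ (j + 1)"
        using dyadic_shell[of "\<rho> t s x y / \<rho>0" K] cover[OF dom] \<rho>0_pos by (auto simp: field_simps)
      with \<rho>0_pos have "j < K" "2 ^ j * \<rho>0 < \<rho> t s x y" "\<rho> t s x y \<le> 2 ^ (j + 1) * \<rho>0"
        by (auto simp: field_simps)
      then show ?thesis using integrand_critical_shell[OF \<alpha> a \<rho>0]
        by (intro exI[of _ j]) (simp add: c_def \<phi>_def r_def mult.assoc)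
    qed
    then show "ennreal (integrand b \<gamma> \<gamma>' d p a t s x y) \<le> (\<Sum>j<Suc K. c j * scaled_tensor (\<phi> j) (r j) (t - s) (x - y))"
      by (meson finite_lessThan lessThan_iff member_le_sum order_trans zero_le)
  qed (use \<rho>0_pos in \<open>auto simp: \<phi>_def r_def\<close>)
  also have "(\<Sum>j<Suc K. c j * ennreal (r j ^ (DIM('a) + 2)) * tensor_volume (\<phi> j))
      = (\<Sum>j<K. ennreal (2 ^ (DIM('a) + 2)) * tensor_volume (local_profile 0))
        + tensor_volume (local_profile ((n - m') / n))"
  proof -
    have "c j * ennreal (r j ^ (DIM('a) + 2)) = ennreal (2 ^ (DIM('a) + 2))" if "j < K" for j
      using tensor_weight[of "2 ^ j * \<rho>0" 2] \<rho>0_pos that by (simp add: c_def r_def)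
    moreover have "c K * ennreal (r K ^ (DIM('a) + 2)) = 1"
      using tensor_weight[OF \<rho>0_pos, of 1] by (simp add: c_def r_def)
    ultimately show ?thesis by (simp add: \<phi>_def)
  qed
  finally show ?thesis by (simp add: mult.assoc)
qed

lemma FF_bound_critical:
  assumes \<alpha>: "\<alpha> = 0" and N0: "N0 \<ge> 2 * N + 1"
  shows "\<exists>C>0. \<forall>a\<in>{0<..N}. FF a \<le> ennreal C * ennreal (ln (N0 / a))"
proof -
  obtain R where R: "R > 0"
    "\<And>t s x y. t \<in> {t1..t2} \<Longrightarrow> s \<in> {t1..t2} \<Longrightarrow> x \<in> cbox aJ bJ \<Longrightarrow> y \<in> cbox aJ bJ \<Longrightarrow> \<rho> t s x y \<le> R"
    using domain_radius by blast
  define m' where "m' = min m n"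
  have m': "0 < m'" "m' \<le> m" "m' \<le> n"
    using m_large \<alpha> \<gamma>_pos n_pos by (auto simp: m'_def \<alpha>_eq)
  have "(n - m') / n < 1" using m' n_pos by simp
  then obtain C0 C1 where C0: "C0 > 0" "tensor_volume (local_profile 0) \<le> ennreal C0"
    and C1: "C1 > 0" "tensor_volume (local_profile ((n - m') / n)) \<le> ennreal C1"
    using finite_ennreal_bound tensor_volume_finite local_profile_integrable by (metis zero_less_one)
  define A where "A = (\<bar>log 2 R\<bar> + 2 / \<gamma> + 1) / ln 2 + 2 / (\<gamma> * ln 2)"
  have A: "A > 0"
  proof -
    have "0 < 2 / \<gamma>" using \<gamma>_pos by simp
    then have "0 < \<bar>log 2 R\<bar> + 2 / \<gamma> + 1" by linarith
    then have "0 < (\<bar>log 2 R\<bar> + 2 / \<gamma> + 1) / ln 2" by simp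
    moreover have "0 < 2 / (\<gamma> * ln 2)" using \<gamma>_pos by simp
    ultimately show ?thesis unfolding A_def by linarith
  qed
  define C where "C = A * 2 ^ (DIM('a) + 2) * C0 + C1 / ln 2"
  have C: "C > 0" unfolding C_def using A C0 C1 by (intro add_pos_pos mult_pos_pos divide_pos_pos) auto
  have "FF a \<le> ennreal (C * ln (N0 / a))" if a: "a \<in> {0<..N}" for a
  proof -
    define \<rho>0 where "\<rho>0 = (a / 2) powr (2 / \<gamma>)"
    obtain K :: nat where K: "R \<le> 2 ^ K * \<rho>0" "real K \<le> A * ln (N0 / a)"
      using dyadic_cover_count[OF \<gamma>_pos R(1), of a N0] a N0 N_pos by (auto simp: \<rho>0_def A_def)
    have "FF a \<le> of_nat K * ennreal (2 ^ (DIM('a) + 2)) * tensor_volume (local_profile 0)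
        + tensor_volume (local_profile ((n - m') / n))"
      using order_trans[OF R(2) K(1)] a by (intro FF_le_dyadic_sum[OF \<alpha> _ \<rho>0_def _ m']) auto
    also have "\<dots> \<le> of_nat K * ennreal (2 ^ (DIM('a) + 2)) * ennreal C0 + ennreal C1"
      using C0 C1 by (intro add_mono mult_left_mono) auto
    also have "\<dots> = ennreal (real K * 2 ^ (DIM('a) + 2) * C0 + C1)"
      using C0 C1 by (simp add: ennreal_plus ennreal_mult ennreal_of_nat_eq_real_of_nat)
    also have "\<dots> \<le> ennreal (C * ln (N0 / a))"
    proof (rule ennreal_leI)
      have "ln 2 \<le> ln (N0 / a)" using a N0 by (intro ln_mono) (auto simp: field_simps)
      then have "C1 \<le> C1 / ln 2 * ln (N0 / a)" using C1 by (simp add: field_simps)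
      moreover have "real K * 2 ^ (DIM('a) + 2) * C0 \<le> A * ln (N0 / a) * 2 ^ (DIM('a) + 2) * C0"
        using K(2) C0 by (intro mult_right_mono) auto
      ultimately show "real K * 2 ^ (DIM('a) + 2) * C0 + C1 \<le> C * ln (N0 / a)"
        by (simp add: C_def algebra_simps)
    qed
    finally show ?thesis .
  qed
  with C show ?thesis using ennreal_mult' by (metis less_imp_le)
qed

text \<open>The three regimes combined into the kernel \<open>K_\<alpha>\<close>; at \<open>a = 0\<close> the kernel is infinite for \<open>\<alpha> \<ge> 0\<close>.\<close>
lemma FF_le_Kfun:
  "\<exists>N0min. \<forall>N0 \<ge> N0min. \<exists>C>0. \<forall>a\<in>{0..N}. FF a \<le> ennreal C * Kfun N0 \<alpha> a"
proof (rule exI[of _ "2 * N + 1"], intro allI impI)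
  fix N0 assume N0: "N0 \<ge> 2 * N + 1"
  have at_zero: "ennreal C * Kfun N0 \<alpha> 0 = \<infinity>" if "\<alpha> \<ge> 0" "C > 0" for C
    using that by (auto simp: Kfun_def ennreal_mult_top)
  consider "\<alpha> < 0" | "\<alpha> = 0" | "\<alpha> > 0" by linarith
  then show "\<exists>C>0. \<forall>a\<in>{0..N}. FF a \<le> ennreal C * Kfun N0 \<alpha> a"
  proof cases
    case 1
    then show ?thesis using FF_bound_subcritical by (auto simp: Kfun_def)
  next
    case 2
    then obtain C where "C > 0" "\<forall>a\<in>{0<..N}. FF a \<le> ennreal C * ennreal (ln (N0 / a))"
      using FF_bound_critical N0 by blast
    then show ?thesis using 2 at_zero by (intro exI[of _ C]) (auto simp: Kfun_def)
  next
    case 3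
    then obtain C where "C > 0" "\<forall>a\<in>{0<..N}. FF a \<le> ennreal C * ennreal (a powr (- \<alpha>))"
      using FF_bound_supercritical by blast
    then show ?thesis using 3 at_zero by (intro exI[of _ C]) (auto simp: Kfun_def)
  qed
qed

end

theorem lemma2p3:
  fixes T t1 t2 :: real and aJ bJ :: "real ^ 'k" and d :: nat
  assumes "T > 0" and "0 < t1" and "t1 < t2" and "t2 \<le> T"
    and "\<forall>i. aJ $ i < bJ $ i"
    and "d \<ge> 1"
  shows "\<forall>N b \<gamma> \<gamma>' p. N > 0 \<and> b > 0 \<and> \<gamma> > 0 \<and> \<gamma>' > \<gamma> \<and>
           p > 2 * real d / \<gamma> * (\<gamma>' * b - 2 * real CARD('k) - 4) \<longrightarrow>
         (\<exists>N0min. \<forall>N0 \<ge> N0min. \<exists>C::real. C > 0 \<and>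
           (\<forall>a \<in> {0..N}.
              (\<integral>\<^sup>+ t \<in> {t1..t2}. \<integral>\<^sup>+ s \<in> {t1..t2}. \<integral>\<^sup>+ x \<in> cbox aJ bJ. \<integral>\<^sup>+ y \<in> cbox aJ bJ.
                  ennreal (integrand b \<gamma> \<gamma>' d p a t s x y) \<partial>lborel \<partial>lborel \<partial>lborel \<partial>lborel)
              \<le> ennreal C * Kfun N0 (\<gamma>' / \<gamma> * b - (4 + 2 * real CARD('k)) / \<gamma>) a))"
proof (intro allI impI)
  fix N b \<gamma> \<gamma>' p :: real
  assume "N > 0 \<and> b > 0 \<and> \<gamma> > 0 \<and> \<gamma>' > \<gamma> \<and> p > 2 * real d / \<gamma> * (\<gamma>' * b - 2 * real CARD('k) - 4)"
  then interpret integrand_setting t1 t2 aJ bJ N b \<gamma> \<gamma>' p d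
    using assms by unfold_locales auto
  show "\<exists>N0min. \<forall>N0 \<ge> N0min. \<exists>C::real. C > 0 \<and>
           (\<forall>a \<in> {0..N}.
              (\<integral>\<^sup>+ t \<in> {t1..t2}. \<integral>\<^sup>+ s \<in> {t1..t2}. \<integral>\<^sup>+ x \<in> cbox aJ bJ. \<integral>\<^sup>+ y \<in> cbox aJ bJ.
                  ennreal (integrand b \<gamma> \<gamma>' d p a t s x y) \<partial>lborel \<partial>lborel \<partial>lborel \<partial>lborel)
              \<le> ennreal C * Kfun N0 (\<gamma>' / \<gamma> * b - (4 + 2 * real CARD('k)) / \<gamma>) a)"
    using FF_le_Kfun by (simp add: FF_def space_time_integral_def \<alpha>_def)
qed

end
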